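(* Let $p>5$ be a prime, $q=p^h$, and let $\mathcal{F}$ be the projective closure of $ax^n+by^m=1$ over $\mathbb{F}_q$, with $a,b\in\mathbb{F}_q^*$ and $m,n$ positive integers with $n\ge m>2$. If $p\mid(n-1)$ and $p\mid(m-2)$, then $\mathcal{F}$ is $\mathbb{F}_q$-Frobenius classical with respect to conics.
   Context: With $\varphi_0,\dots,\varphi_5$ the monomials of degree 2 in $x,y,1$, $\tau$ separating and $D^{(k)}_\tau$ Hasse derivatives, the $\mathbb{F}_q$-Frobenius order sequence w.r.t. conics is the lexicographically smallest $\nu_0<\dots<\nu_4$ such that the $6\times6$ determinant with first row $(\varphi_j^q)_j$ and rows $(D^{(\nu_i)}_\tau\varphi_j)_j$ is nonzero; the curve is $\mathbb{F}_q$-Frobenius classical w.r.t. conics if $\nu_i=i$ for all $i$. *)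

theory Defs
  imports "HOL-Computational_Algebra.Polynomial" "HOL-Computational_Algebra.Formal_Power_Series"
          "Jordan_Normal_Form.Determinant"
begin

text \<open>The finite field F_q is a type 'a. The function field of the curve is
  modelled inside an arbitrary field 'k containing F_q (via the embedding iota) and
  elements x, y with x transcendental over F_q and a x^n + b y^m = 1; then F_q(x,y) is the
  function field of the curve. Hasse derivatives with respect to the separating variable x
  are given by a Hasse-Schmidt derivation E : 'k -> 'k[[t]] (a ring homomorphism with
  E f = f + D1 f t + D2 f t^2 + ...), which is F_q-linear and sends x to x + t.
  On F_q(x,y) such an E is unique, so D^(k) f = fps_nth (E f) k is the Hasse derivative
  D^(k)_x f.\<close>

definition field_embedding :: "('a::field \<Rightarrow> 'k::field) \<Rightarrow> bool" where
  "field_embedding \<iota> \<longleftrightarrow> (\<forall>c d. \<iota> (c + d) = \<iota> c + \<iota> d) \<and> (\<forall>c d. \<iota> (c * d) = \<iota> c * \<iota> d) \<and> \<iota> 1 = 1"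

definition transcendental_over :: "('a::field \<Rightarrow> 'k::field) \<Rightarrow> 'k \<Rightarrow> bool" where
  "transcendental_over \<iota> x \<longleftrightarrow> (\<forall>P::'a poly. P \<noteq> 0 \<longrightarrow> poly (map_poly \<iota> P) x \<noteq> 0)"

definition hasse_wrt :: "('a::field \<Rightarrow> 'k::field) \<Rightarrow> 'k \<Rightarrow> ('k \<Rightarrow> 'k fps) \<Rightarrow> bool" where
  "hasse_wrt \<iota> x E \<longleftrightarrow>
     (\<forall>f g. E (f + g) = E f + E g) \<and> (\<forall>f g. E (f * g) = E f * E g) \<and> E 1 = 1 \<and>
     (\<forall>f. fps_nth (E f) 0 = f) \<and>
     (\<forall>c. E (\<iota> c) = fps_const (\<iota> c)) \<and>
     E x = fps_const x + fps_X"

definition hasse :: "('k \<Rightarrow> 'k fps) \<Rightarrow> nat \<Rightarrow> 'k \<Rightarrow> 'k" where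
  "hasse E k f = fps_nth (E f) k"

definition conic_monomials :: "'k::field \<Rightarrow> 'k \<Rightarrow> 'k list" where
  "conic_monomials x y = [1, x, y, x^2, x*y, y^2]"

definition frob_wronskian :: "('k::field \<Rightarrow> 'k fps) \<Rightarrow> nat \<Rightarrow> 'k list \<Rightarrow> nat list \<Rightarrow> 'k" where
  "frob_wronskian E q \<phi> \<nu> =
     det (mat 6 6 (\<lambda>(i, j). if i = 0 then (\<phi> ! j) ^ q else hasse E (\<nu> ! (i - 1)) (\<phi> ! j)))"

definition strictly_increasing5 :: "nat list \<Rightarrow> bool" where
  "strictly_increasing5 \<nu> \<longleftrightarrow> length \<nu> = 5 \<and> sorted_wrt (<) \<nu>"

definition admissible_seq :: "('k::field \<Rightarrow> 'k fps) \<Rightarrow> nat \<Rightarrow> 'k list \<Rightarrow> nat list \<Rightarrow> bool" where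
  "admissible_seq E q \<phi> \<nu> \<longleftrightarrow> strictly_increasing5 \<nu> \<and> frob_wronskian E q \<phi> \<nu> \<noteq> 0"

definition is_frob_order_seq :: "('k::field \<Rightarrow> 'k fps) \<Rightarrow> nat \<Rightarrow> 'k list \<Rightarrow> nat list \<Rightarrow> bool" where
  "is_frob_order_seq E q \<phi> \<nu> \<longleftrightarrow> admissible_seq E q \<phi> \<nu> \<and>
     (\<forall>\<nu>'. admissible_seq E q \<phi> \<nu>' \<longrightarrow> \<nu> = \<nu>' \<or> (\<nu>, \<nu>') \<in> lexord {(a, b). a < b})"

definition frobenius_classical_conics :: "('k::field \<Rightarrow> 'k fps) \<Rightarrow> nat \<Rightarrow> 'k \<Rightarrow> 'k \<Rightarrow> bool" where
  "frobenius_classical_conics E q x y \<longleftrightarrow> is_frob_order_seq E q (conic_monomials x y) [0, 1, 2, 3, 4]"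

end

theory Submission
  imports Defs "Jordan_Normal_Form.Char_Poly"
begin

(* Since p divides n - 1 and m - 2, u = x^(n-1) and v = y^(m-2) are p-th powers, so their Hasse
   derivatives of orders 1, ..., p - 1 vanish and they behave like constants under D^(k) for k < p.
   Differentiating a u x + b v y^2 = 1 up to order 4 < p shows that D^(k)(y^2) = 0 for k = 2, 3, 4,
   while w = D^(1)(y^2) = -a u / (b v) is nonzero; with this, the determinant for the orders
   0, ..., 4 factors as ((y^q)^2 - y^2 - w (x^q - x)) ((D^(3) y)^2 - D^(2) y D^(4) y).
   The second factor is nonzero since 16 y^4 times it equals -(D^(1) y)^6. If the first one vanished,
   multiplying it by b v would give b y^(m-2+2q) = 1 - a x^(n-1+q), which together with
   b y^m = 1 - a x^n is a nontrivial polynomial relation for x over F_q. *)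

no_notation vec_index (infixl \<open>$\<close> 100)
notation fps_nth (infixl \<open>$\<close> 75)

lemma field_embedding_imp_field_hom:
  assumes "field_embedding \<iota>"
  shows "field_hom \<iota>"
proof -
  have add: "\<iota> (c + d) = \<iota> c + \<iota> d" and "\<iota> (c * d) = \<iota> c * \<iota> d" and "\<iota> 1 = 1" for c d
    using assms by (auto simp: field_embedding_def)
  moreover have "\<iota> 0 = 0"
    using add[of 0 0] by (metis add.right_neutral add_left_cancel)
  ultimately show ?thesis
    by unfold_locales auto
qed

lemma hasse_wrt_imp_comm_ring_hom:
  assumes "hasse_wrt \<iota> x E"
  shows "comm_ring_hom E"
proof -
  have add: "E (f + g) = E f + E g" and "E (f * g) = E f * E g" and "E 1 = 1" for f g
    using assms by (auto simp: hasse_wrt_def)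
  moreover have "E 0 = 0"
    using add[of 0 0] by (metis add.right_neutral add_left_cancel)
  ultimately show ?thesis
    by unfold_locales auto
qed

lemma hasse_wrt_nth:
  assumes "hasse_wrt \<iota> x E"
  shows "E f $ 0 = f" and "E x $ k = (if k = 0 then x else if k = 1 then 1 else 0)"
  using assms by (auto simp: hasse_wrt_def)

lemma of_nat_card_UNIV_eq_0: "of_nat (card (UNIV :: 'a::{finite, ring_1} set)) = (0 :: 'a)"
proof -
  have "(\<Sum>c\<in>UNIV. c + 1) = (\<Sum>c\<in>(UNIV :: 'a set). c)"
    by (rule sum.reindex_bij_witness[of _ "\<lambda>c. c - 1" "\<lambda>c. c + 1"]) auto
  then show ?thesis
    by (simp add: sum.distrib)
qed

lemma CHAR_finite_field:
  assumes "prime p" and "card (UNIV :: 'a::{finite, field} set) = p ^ h"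
  shows "CHAR('a) = p"
proof -
  have "prime CHAR('a)"
    by (intro prime_CHAR_semidom finite_imp_CHAR_pos) simp
  moreover have "CHAR('a) dvd p"
    using of_nat_card_UNIV_eq_0[where 'a = 'a] assms(2) by (simp add: of_nat_eq_0_iff_char_dvd)
  ultimately show ?thesis
    using assms(1) primes_dvd_imp_eq by blast
qed

lemma (in field_hom) CHAR_eq: "CHAR('b) = CHAR('a)"
proof (rule CHAR_eqI)
  show "of_nat CHAR('a) = (0 :: 'b)"
    by (metis hom_of_nat of_nat_CHAR hom_zero)
  show "CHAR('a) dvd k" if "of_nat k = (0 :: 'b)" for k
    using that by (metis hom_of_nat hom_0_iff of_nat_eq_0_iff_char_dvd)
qed


subsection \<open>Power series without terms of degree 1 to p - 1\<close>

definition fps_gap :: "nat \<Rightarrow> 'a::zero fps \<Rightarrow> bool" where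
  "fps_gap p F \<longleftrightarrow> (\<forall>k. 0 < k \<and> k < p \<longrightarrow> F $ k = 0)"

lemma fps_gap_mult_nth:
  fixes F G :: "'a::comm_semiring_1 fps"
  assumes "fps_gap p F" and "k < p"
  shows "(F * G) $ k = F $ 0 * G $ k"
proof -
  have "(F * G) $ k = (\<Sum>i=0..k. F $ i * G $ (k - i))"
    by (rule fps_mult_nth)
  also have "\<dots> = F $ 0 * G $ k + (\<Sum>i=Suc 0..k. F $ i * G $ (k - i))"
    by (simp add: sum.atLeast_Suc_atMost)
  also have "(\<Sum>i=Suc 0..k. F $ i * G $ (k - i)) = 0"
    using assms by (intro sum.neutral) (auto simp: fps_gap_def)
  finally show ?thesis
    by simp
qed

lemma fps_gap_mult:
  fixes F G :: "'a::comm_semiring_1 fps"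
  assumes "fps_gap p F" and "fps_gap p G"
  shows "fps_gap p (F * G)"
  using assms by (auto simp: fps_gap_def fps_gap_mult_nth)

lemma fps_gap_power:
  fixes F :: "'a::comm_semiring_1 fps"
  assumes "fps_gap p F"
  shows "fps_gap p (F ^ r)"
  by (induction r) (auto simp: fps_gap_mult assms, simp add: fps_gap_def)

lemma fps_gap_power_CHAR:
  fixes F :: "'a::comm_ring_1 fps"
  assumes "prime p" and "CHAR('a) = p"
  shows "fps_gap p (F ^ p)"
proof -
  have F: "F = fps_const (F $ 0) + fps_X * fps_shift 1 F"
    by (rule fps_ext) (simp add: nth_less_subdegree_zero split: nat.split)
  have "F ^ p = fps_const (F $ 0) ^ p + (fps_X * fps_shift 1 F) ^ p"
    using assms by (subst F) (intro freshmans_dream, simp_all)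
  also have "\<dots> = fps_const ((F $ 0) ^ p) + fps_X ^ p * (fps_shift 1 F) ^ p"
    by (simp add: power_mult_distrib)
  finally show ?thesis
    by (simp add: fps_gap_def fps_X_power_mult_nth)
qed


subsection \<open>The determinant for the orders 0, 1, 2, 3, 4\<close>

lemma det_mat_Suc_expand_first_col:
  fixes f :: "nat \<times> nat \<Rightarrow> 'a::comm_ring_1"
  shows "det (mat (Suc n) (Suc n) f) =
    (\<Sum>i<Suc n. (-1)^i * f (i, 0) * det (mat n n (\<lambda>(a, b). f (if a < i then a else Suc a, Suc b))))"
    (is "_ = ?rhs")
proof -
  have "det (mat (Suc n) (Suc n) f) =
      (\<Sum>i<Suc n. mat (Suc n) (Suc n) f $$ (i, 0) * cofactor (mat (Suc n) (Suc n) f) i 0)"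
    by (rule laplace_expansion_column) auto
  also have "\<dots> = ?rhs"
  proof (rule sum.cong[OF refl])
    fix i assume "i \<in> {..<Suc n}"
    moreover have "mat_delete (mat (Suc n) (Suc n) f) i 0 =
        mat n n (\<lambda>(a, b). f (if a < i then a else Suc a, Suc b))"
      by (rule eq_matI) (auto simp: mat_delete_def insert_index_def)
    ultimately show "mat (Suc n) (Suc n) f $$ (i, 0) * cofactor (mat (Suc n) (Suc n) f) i 0 =
        (-1)^i * f (i, 0) * det (mat n n (\<lambda>(a, b). f (if a < i then a else Suc a, Suc b)))"
      by (simp add: cofactor_def)
  qed
  finally show ?thesis .
qed

function det_rows :: "'a::comm_ring_1 list list \<Rightarrow> 'a" where
  "det_rows [] = 1"
| "det_rows (r # rs) = (\<Sum>i<Suc (length rs).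
     (-1)^i * hd ((r # rs) ! i) * det_rows (map tl (take i (r # rs) @ drop (Suc i) (r # rs))))"
  by pat_completeness auto
termination
  by (relation "measure length") auto

lemma det_rows_eq_det:
  assumes "length rs = n" and "\<forall>r\<in>set rs. length r = n"
  shows "det (mat n n (\<lambda>(i, j). rs ! i ! j)) = det_rows rs"
  using assms
proof (induction n arbitrary: rs)
  case 0
  then show ?case
    by (simp add: det_def)
next
  case (Suc n)
  then obtain r rs' where rs: "rs = r # rs'"
    by (cases rs) auto
  define minor where "minor i = map tl (take i rs @ drop (Suc i) rs)" for i
  have "det (mat (Suc n) (Suc n) (\<lambda>(i, j). rs ! i ! j)) =
      (\<Sum>i<Suc n. (-1)^i * rs ! i ! 0 * det (mat n n (\<lambda>(a, b). rs ! (if a < i then a else Suc a) ! Suc b)))"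
    by (subst det_mat_Suc_expand_first_col) (simp add: case_prod_beta)
  also have "\<dots> = (\<Sum>i<Suc n. (-1)^i * hd (rs ! i) * det_rows (minor i))"
  proof (rule sum.cong[OF refl])
    fix i assume "i \<in> {..<Suc n}"
    then have i: "i < Suc n" by simp
    have len_i: "length (rs ! i) = Suc n"
      using Suc.prems i by auto
    have minor_nth: "minor i ! a ! b = rs ! (if a < i then a else Suc a) ! Suc b"
      if "a < n" and "b < n" for a b
      using Suc.prems i that by (auto simp: minor_def nth_append nth_tl min_def)
    have "length (minor i) = n" and "\<forall>r\<in>set (minor i). length r = n"
      using Suc.prems i by (auto simp: minor_def dest: in_set_takeD in_set_dropD)
    then have "det (mat n n (\<lambda>(a, b). minor i ! a ! b)) = det_rows (minor i)"
      by (rule Suc.IH)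
    moreover have "mat n n (\<lambda>(a, b). minor i ! a ! b) =
        mat n n (\<lambda>(a, b). rs ! (if a < i then a else Suc a) ! Suc b)"
      by (rule eq_matI) (auto simp: minor_nth)
    moreover have "rs ! i ! 0 = hd (rs ! i)"
      using len_i by (cases "rs ! i") auto
    ultimately show "(-1)^i * rs ! i ! 0 * det (mat n n (\<lambda>(a, b). rs ! (if a < i then a else Suc a) ! Suc b)) =
        (-1)^i * hd (rs ! i) * det_rows (minor i)"
      by simp
  qed
  also have "\<dots> = det_rows rs"
    using Suc.prems by (simp add: rs minor_def)
  finally show ?case .
qed

lemma fps_linear_mult_nth:
  fixes c :: "'a::comm_ring_1"
  shows "((fps_const c + fps_X) * G) $ k = c * G $ k + (if k = 0 then 0 else G $ (k - 1))"
  by (simp add: algebra_simps)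

lemma frob_wronskian_conics_eq:
  fixes E :: "'k::field \<Rightarrow> 'k fps"
  assumes E: "hasse_wrt \<iota> x E"
    and y2: "\<And>k. k \<in> {2, 3, 4} \<Longrightarrow> E (y^2) $ k = 0"
  shows "frob_wronskian E q (conic_monomials x y) [0, 1, 2, 3, 4] =
    ((y^q)^2 - y^2 - E (y^2) $ 1 * (x^q - x)) * ((E y $ 3)^2 - E y $ 2 * E y $ 4)"
proof -
  interpret E: comm_ring_hom E
    using E by (rule hasse_wrt_imp_comm_ring_hom)
  define w where "w = E (y^2) $ 1"
  define T where "T = [[1, x^q, y^q, (x^q)^2, x^q * y^q, (y^q)^2],
    [1, x, y, x^2, x * y, y^2],
    [0, 1, E y $ 1, 2 * x, x * E y $ 1 + y, w],
    [0, 0, E y $ 2, 1, x * E y $ 2 + E y $ 1, 0],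
    [0, 0, E y $ 3, 0, x * E y $ 3 + E y $ 2, 0],
    [0, 0, E y $ 4, 0, x * E y $ 4 + E y $ 3, 0]]"
  have Ex: "E x = fps_const x + fps_X"
    using E by (simp add: hasse_wrt_def)
  have E_x2: "E (x^2) = (fps_const x + fps_X) * (fps_const x + fps_X)"
    and E_xy: "E (x * y) = (fps_const x + fps_X) * E y"
    by (simp_all add: E.hom_power E.hom_mult Ex power2_eq_square)
  have frobenius_squares: "(x^2)^q = (x^q)^2" "(y^2)^q = (y^q)^2"
    by (simp_all flip: power_mult add: mult.commute)
  have less6: "i < 6 \<Longrightarrow> i \<in> {0, 1, 2, 3, 4, 5}" for i :: nat
    by auto
  have "frob_wronskian E q (conic_monomials x y) [0, 1, 2, 3, 4] = det (mat 6 6 (\<lambda>(i, j). T ! i ! j))"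
    unfolding frob_wronskian_def
  proof (intro arg_cong[where f = det] eq_matI)
    fix i j assume "i < dim_row (mat 6 6 (\<lambda>(i, j). T ! i ! j))" "j < dim_col (mat 6 6 (\<lambda>(i, j). T ! i ! j))"
    then have "i \<in> {0, 1, 2, 3, 4, 5}" "j \<in> {0, 1, 2, 3, 4, 5}"
      using less6 by auto
    then show "mat 6 6 (\<lambda>(i, j). if i = 0 then (conic_monomials x y ! j) ^ q
        else hasse E ([0, 1, 2, 3, 4] ! (i - 1)) (conic_monomials x y ! j)) $$ (i, j) =
      mat 6 6 (\<lambda>(i, j). T ! i ! j) $$ (i, j)"
      using y2 by (auto simp: T_def w_def hasse_def conic_monomials_def hasse_wrt_nth[OF E]
          E_x2 E_xy fps_linear_mult_nth power_mult_distrib frobenius_squares)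
  qed auto
  also have "\<dots> = det_rows T"
    by (rule det_rows_eq_det) (auto simp: T_def)
  also have "\<dots> = ((y^q)^2 - y^2 - w * (x^q - x)) * ((E y $ 3)^2 - E y $ 2 * E y $ 4)"
    unfolding T_def by (simp, simp add: algebra_simps power2_eq_square)
  finally show ?thesis
    by (simp add: w_def)
qed

lemma fps_square_nth:
  fixes F :: "'a::comm_ring_1 fps"
  shows "(F * F) $ 1 = 2 * F $ 0 * F $ 1"
    and "(F * F) $ 2 = 2 * F $ 0 * F $ 2 + (F $ 1)^2"
    and "(F * F) $ 3 = 2 * F $ 0 * F $ 3 + 2 * F $ 1 * F $ 2"
    and "(F * F) $ 4 = 2 * F $ 0 * F $ 4 + 2 * F $ 1 * F $ 3 + (F $ 2)^2"
  by (simp_all add: fps_mult_nth numeral_eq_Suc atLeast0_atMost_Suc algebra_simps power2_eq_square)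

lemma fps_square_minor_ne_0:
  fixes F :: "'a::field fps"
  assumes "(F * F) $ 1 \<noteq> 0" and "\<And>k. k \<in> {2, 3, 4} \<Longrightarrow> (F * F) $ k = 0"
  shows "(F $ 3)^2 - F $ 2 * F $ 4 \<noteq> 0"
proof
  assume minor: "(F $ 3)^2 - F $ 2 * F $ 4 = 0"
  define y y1 y2 y3 y4
    where "y = F $ 0" and "y1 = F $ 1" and "y2 = F $ 2" and "y3 = F $ 3" and "y4 = F $ 4"
  have h2: "2 * y * y2 = - (y1^2)" and h3: "2 * y * y3 = - (2 * y1 * y2)"
    and h4: "2 * y * y4 = - (2 * y1 * y3) - y2^2"
    using assms(2)[of 2] assms(2)[of 3] assms(2)[of 4]
    by (simp_all add: fps_square_nth y_def y1_def y2_def y3_def y4_def eq_neg_iff_add_eq_0 algebra_simps)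
  have "16 * y^4 * (y3^2 - y2 * y4) = 4 * y^2 * (2 * y * y3)^2 - 8 * y^3 * y2 * (2 * y * y4)"
    by (simp add: algebra_simps eval_nat_numeral)
  also have "\<dots> = 4 * y^2 * (2 * y1 * y2)^2 + 8 * y^3 * y2 * (2 * y1 * y3 + y2^2)"
    unfolding h3 h4 by (simp add: algebra_simps)
  also have "\<dots> = 16 * y^2 * y1^2 * y2^2 + 8 * y^2 * y1 * y2 * (2 * y * y3) + (2 * y * y2)^3"
    by (simp add: algebra_simps eval_nat_numeral)
  also have "\<dots> = - (y1^6)"
    unfolding h2 h3 by (simp add: algebra_simps eval_nat_numeral)
  finally have "y1 = 0"
    using minor by (simp add: y2_def y3_def y4_def)
  then show False
    using assms(1) by (simp add: fps_square_nth y1_def)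
qed


subsection \<open>Hasse derivatives on the curve\<close>

lemma hasse_square_on_curve:
  fixes E :: "'k::field \<Rightarrow> 'k fps" and a b :: "'a::field"
  assumes E: "hasse_wrt \<iota> x E" and p: "prime p" "CHAR('k) = p"
    and dvd: "p dvd n - 1" "p dvd m - 2" and "1 \<le> n" "2 \<le> m"
    and curve: "\<iota> a * x^n + \<iota> b * y^m = 1"
  shows "\<iota> a * x^(n - 1) + \<iota> b * y^(m - 2) * E (y^2) $ 1 = 0"
    and "2 \<le> k \<Longrightarrow> k < p \<Longrightarrow> \<iota> b * y^(m - 2) * E (y^2) $ k = 0"
proof -
  interpret E: comm_ring_hom E
    using E by (rule hasse_wrt_imp_comm_ring_hom)
  define u v where "u = x^(n - 1)" and "v = y^(m - 2)"
  have gap_pth_power: "fps_gap p (E (f^(p * r)))" for f r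
    unfolding E.hom_power power_mult by (intro fps_gap_power fps_gap_power_CHAR p)
  have gaps: "fps_gap p (E u)" "fps_gap p (E v)"
    using dvd gap_pth_power by (auto simp: u_def v_def elim!: dvdE)
  have "x^n = u * x" and "y^m = v * y^2"
    using assms(6,7) unfolding u_def v_def by (metis le_add_diff_inverse2 power_add power_one_right)+
  with curve have curve_E: "fps_const (\<iota> a) * (E u * E x) + fps_const (\<iota> b) * (E v * E (y^2)) = 1"
    using E by (metis E.hom_add E.hom_mult E.hom_one hasse_wrt_def mult.assoc)
  have coeff_k: "\<iota> a * u * E x $ k + \<iota> b * v * E (y^2) $ k = 0" if "0 < k" "k < p" for k
  proof -
    have "(fps_const (\<iota> a) * (E u * E x) + fps_const (\<iota> b) * (E v * E (y^2))) $ k = 0"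
      using curve_E \<open>0 < k\<close> by simp
    then show ?thesis
      using fps_gap_mult_nth[OF gaps(1) \<open>k < p\<close>] fps_gap_mult_nth[OF gaps(2) \<open>k < p\<close>]
      by (simp add: hasse_wrt_nth(1)[OF E] mult.assoc)
  qed
  show "\<iota> a * x^(n - 1) + \<iota> b * y^(m - 2) * E (y^2) $ 1 = 0"
    using coeff_k[of 1] prime_gt_1_nat[OF p(1)] by (simp add: hasse_wrt_nth[OF E] u_def v_def)
  show "\<iota> b * y^(m - 2) * E (y^2) $ k = 0" if "2 \<le> k" "k < p"
    using coeff_k[of k] that by (simp add: hasse_wrt_nth[OF E] u_def v_def)
qed


subsection \<open>Transcendence of x\<close>

lemma transcendental_over_nonzero:
  assumes "field_hom \<iota>" and "transcendental_over \<iota> x"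
  shows "x \<noteq> 0"
proof -
  interpret \<iota>: field_hom \<iota> by fact
  have "poly (map_poly \<iota> [:0, 1:]) x \<noteq> 0"
    using assms(2) by (simp add: transcendental_over_def del: map_poly_pCons)
  then show ?thesis
    by simp
qed

lemma transcendental_over_monom_ne_1:
  assumes "field_hom \<iota>" and "transcendental_over \<iota> x" and "c \<noteq> 0" and "0 < n"
  shows "\<iota> c * x^n \<noteq> 1"
proof -
  interpret \<iota>: map_poly_comm_ring_hom \<iota>
    using assms(1) by (simp add: field_hom.axioms map_poly_comm_ring_hom.intro idom_hom.axioms)
  have "coeff (Polynomial.monom c n - 1) n = c"
    using assms(4) by simp
  then have "Polynomial.monom c n - 1 \<noteq> 0"
    using assms(3) by (metis coeff_0)
  then have "poly (map_poly \<iota> (Polynomial.monom c n - 1)) x \<noteq> 0"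
    using assms(2) transcendental_over_def by blast
  then show ?thesis
    by (simp add: hom_distribs map_poly_monom poly_monom)
qed

lemma curve_coordinates_nonzero:
  assumes "field_hom \<iota>" and "transcendental_over \<iota> x" and "a \<noteq> 0" and "0 < n" and "0 < m"
    and curve: "\<iota> a * x^n + \<iota> b * y^m = 1"
  shows "x \<noteq> 0" and "y \<noteq> 0"
proof -
  show "x \<noteq> 0"
    using assms(1,2) by (rule transcendental_over_nonzero)
  show "y \<noteq> 0"
  proof
    assume "y = 0"
    then have "\<iota> a * x^n = 1"
      using assms(5) curve by (simp add: power_0_left)
    then show False
      using transcendental_over_monom_ne_1[OF assms(1-4)] by contradiction
  qed
qed

lemma binomial_relations_incompatible:
  fixes a b :: "'a::field" and \<iota> :: "'a \<Rightarrow> 'k::field"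
  assumes "field_hom \<iota>" and "transcendental_over \<iota> x" and "a \<noteq> 0" and "b \<noteq> 0" and "0 < n"
    and "d * m < n * N"
    and rel_n: "\<iota> b * y^m = 1 - \<iota> a * x^n" and rel_d: "\<iota> b * y^N = 1 - \<iota> a * x^d"
  shows False
proof -
  interpret \<iota>: map_poly_comm_ring_hom \<iota>
    using assms(1) by (simp add: field_hom.axioms map_poly_comm_ring_hom.intro idom_hom.axioms)
  define P where "P = smult (b^m) ((1 - Polynomial.monom a n)^N) - smult (b^N) ((1 - Polynomial.monom a d)^m)"
  have "poly (map_poly \<iota> P) x = \<iota> b^m * (1 - \<iota> a * x^n)^N - \<iota> b^N * (1 - \<iota> a * x^d)^m"
    by (simp add: P_def hom_distribs map_poly_monom poly_monom)
  also have "\<dots> = \<iota> b^m * (\<iota> b * y^m)^N - \<iota> b^N * (\<iota> b * y^N)^m"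
    by (simp add: rel_n rel_d)
  also have "\<dots> = 0"
    by (simp add: power_mult_distrib power_add mult.commute[of m N] flip: power_mult)
  finally have "poly (map_poly \<iota> P) x = 0" .
  moreover have "coeff P (n * N) = b^m * (- a)^N"
  proof -
    define Q where "Q = 1 - Polynomial.monom a n"
    have Q: "Q = 1 + - Polynomial.monom a n"
      by (simp add: Q_def)
    have "degree Q = n"
      unfolding Q using assms(3,5) by (subst degree_add_eq_right) (simp_all add: degree_monom_eq)
    moreover have "lead_coeff Q = - a"
      unfolding Q using assms(3,5)
      by (subst lead_coeff_add_le) (simp_all add: degree_monom_eq lead_coeff_minus)
    moreover have "Q \<noteq> 0"
      using assms(3) calculation by auto
    ultimately have "coeff ((1 - Polynomial.monom a n)^N) (n * N) = (- a)^N"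
      using degree_power_eq[of Q N] lead_coeff_power[of Q N] by (simp add: Q_def mult.commute)
    moreover have "degree (1 - Polynomial.monom a d) \<le> d"
      by (intro degree_diff_le) (simp_all add: degree_monom_le)
    then have "degree ((1 - Polynomial.monom a d)^m) < n * N"
      using degree_power_le[of _ m] assms(6) by (meson le_less_trans le_trans mult_le_mono1)
    ultimately show ?thesis
      by (simp add: P_def coeff_eq_0)
  qed
  then have "P \<noteq> 0"
    using assms(3,4) by auto
  ultimately show False
    using assms(2) by (simp add: transcendental_over_def)
qed

lemma frobenius_factor_ne_0:
  fixes a b :: "'a::field" and \<iota> :: "'a \<Rightarrow> 'k::field"
  assumes "field_hom \<iota>" and "transcendental_over \<iota> x" and "a \<noteq> 0" and "b \<noteq> 0"
    and "2 < m" and "m \<le> n" and "1 < q"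
    and curve: "\<iota> a * x^n + \<iota> b * y^m = 1"
    and w: "\<iota> a * x^(n - 1) + \<iota> b * y^(m - 2) * w = 0"
  shows "(y^q)^2 - y^2 - w * (x^q - x) \<noteq> 0"
proof
  assume frob: "(y^q)^2 - y^2 - w * (x^q - x) = 0"
  have "1 \<le> n" and "2 \<le> m"
    using assms(5,6) by auto
  then have x_n: "x^n = x^(n - 1) * x" and y_m: "y^m = y^(m - 2) * y^2"
    by (metis le_add_diff_inverse2 power_add power_one_right)+
  have w': "\<iota> b * y^(m - 2) * w = - (\<iota> a * x^(n - 1))"
    using w by (simp add: eq_neg_iff_add_eq_0 add.commute)
  have "(y^q)^2 = y^2 + w * (x^q - x)"
    using frob by (simp add: algebra_simps)
  then have "\<iota> b * y^(m - 2 + 2 * q) = \<iota> b * y^(m - 2) * (y^2 + w * (x^q - x))"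
    by (simp add: power_add power_even_eq)
  also have "\<dots> = \<iota> b * y^m + \<iota> b * y^(m - 2) * w * (x^q - x)"
    by (simp add: y_m algebra_simps)
  also have "\<dots> = \<iota> b * y^m - \<iota> a * x^(n - 1) * (x^q - x)"
    by (simp add: w')
  also have "\<dots> = 1 - \<iota> a * x^(n - 1 + q)"
    using curve by (simp add: x_n power_add algebra_simps)
  finally have rel_d: "\<iota> b * y^(m - 2 + 2 * q) = 1 - \<iota> a * x^(n - 1 + q)" .
  have rel_n: "\<iota> b * y^m = 1 - \<iota> a * x^n"
    using curve by (simp add: algebra_simps)
  have "(q - 1) * m < (q - 1) * (2 * n)"
    using assms(5-7) by (intro mult_strict_left_mono) auto
  then have "(n + (q - 1)) * m < n * (m + 2 * (q - 1))"
    by (simp add: algebra_simps)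
  moreover have "n - 1 + q = n + (q - 1)" and "m - 2 + 2 * q = m + 2 * (q - 1)"
    using assms(5-7) by auto
  ultimately have "(n - 1 + q) * m < n * (m - 2 + 2 * q)"
    by simp
  then show False
    using binomial_relations_incompatible[OF assms(1-4) _ _ rel_n rel_d] assms(5,6) by simp
qed

lemma strictly_increasing5_lexord:
  assumes "strictly_increasing5 \<nu>"
  shows "[0, 1, 2, 3, 4] = \<nu> \<or> ([0, 1, 2, 3, 4], \<nu>) \<in> lexord {(a, b). a < (b::nat)}"
proof -
  obtain a0 a1 a2 a3 a4 where \<nu>: "\<nu> = [a0, a1, a2, a3, a4]"
    using assms by (auto simp: strictly_increasing5_def numeral_eq_Suc length_Suc_conv)
  then have "a0 < a1" "a1 < a2" "a2 < a3" "a3 < a4"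
    using assms by (auto simp: strictly_increasing5_def)
  then show ?thesis
    unfolding \<nu> by auto
qed

lemma frobenius_classical_conicsI:
  assumes "frob_wronskian E q (conic_monomials x y) [0, 1, 2, 3, 4] \<noteq> 0"
  shows "frobenius_classical_conics E q x y"
  using assms strictly_increasing5_lexord
  by (auto simp: frobenius_classical_conics_def is_frob_order_seq_def admissible_seq_def
      strictly_increasing5_def)

theorem proposition3p16:
  fixes p h q m n :: nat and a b :: "'a::{finite, field}"
    and \<iota> :: "'a \<Rightarrow> 'k::field" and x y :: 'k and E :: "'k \<Rightarrow> 'k fps"
  assumes "prime p" and "p > 5" and "h \<ge> 1" and "q = p ^ h" and "card (UNIV :: 'a set) = q"
    and "a \<noteq> 0" and "b \<noteq> 0"
    and "m > 2" and "n \<ge> m"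
    and "p dvd (n - 1)" and "p dvd (m - 2)"
    and "field_embedding \<iota>"
    and "transcendental_over \<iota> x"
    and "\<iota> a * x ^ n + \<iota> b * y ^ m = 1"
    and "hasse_wrt \<iota> x E"
  shows "frobenius_classical_conics E q x y"
proof -
  have \<iota>: "field_hom \<iota>"
    using assms(12) by (rule field_embedding_imp_field_hom)
  interpret \<iota>: field_hom \<iota> by fact
  have char: "CHAR('k) = p"
    using CHAR_finite_field[OF assms(1)] assms(4,5) by (simp add: \<iota>.CHAR_eq)
  have "x \<noteq> 0" and "y \<noteq> 0"
    using curve_coordinates_nonzero[OF \<iota> assms(13,6) _ _ assms(14)] assms(8,9) by auto
  then have "\<iota> b * y^(m - 2) \<noteq> 0"
    using assms(7) by simp
  define w where "w = E (y^2) $ 1"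
  have w: "\<iota> a * x^(n - 1) + \<iota> b * y^(m - 2) * w = 0"
    and y2: "\<And>k. k \<in> {2, 3, 4} \<Longrightarrow> E (y^2) $ k = 0"
    using hasse_square_on_curve[OF assms(15,1) char assms(10,11) _ _ assms(14)] assms(2,8,9)
      \<open>\<iota> b * y^(m - 2) \<noteq> 0\<close> by (auto simp: w_def)
  have "w \<noteq> 0"
    using w \<open>x \<noteq> 0\<close> assms(6) by auto
  have "1 < q"
    using assms(2-4) one_less_power[of p h] by simp
  have "(y^q)^2 - y^2 - w * (x^q - x) \<noteq> 0"
    using frobenius_factor_ne_0[OF \<iota> assms(13,6,7,8,9) \<open>1 < q\<close> assms(14) w] .
  moreover have "(E y $ 3)^2 - E y $ 2 * E y $ 4 \<noteq> 0"
    using fps_square_minor_ne_0[of "E y"] \<open>w \<noteq> 0\<close> y2 assms(15)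
    by (simp add: w_def hasse_wrt_def power2_eq_square)
  moreover have "frob_wronskian E q (conic_monomials x y) [0, 1, 2, 3, 4] =
      ((y^q)^2 - y^2 - w * (x^q - x)) * ((E y $ 3)^2 - E y $ 2 * E y $ 4)"
    unfolding w_def using assms(15) y2 by (rule frob_wronskian_conics_eq)
  ultimately show ?thesis
    by (intro frobenius_classical_conicsI) simp
qed

end
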